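(* Let $d\ge1$, and for every $S\subseteq\{1,\dots,d\}$ let $\hat p_S$ be a probability density on $\mathbb{R}^{S}$. Let $\hat m^{(0)}=\{\hat m^{(0)}_S: S\subseteq\{1,\dots,d\}\}$ be any family of functions with $\hat m^{(0)}_S:\mathbb{R}^S\to\mathbb{R}$, and set $\hat m_{\mathrm{Sum}}(x)=\sum_{S\subseteq\{1,\dots,d\}}\hat m^{(0)}_S(x_S)$ for $x\in\mathbb{R}^d$. Then there exists exactly one family of functions $\hat m^\ast=\{\hat m^\ast_S: S\subseteq\{1,\dots,d\}\}$, $\hat m^\ast_S:\mathbb{R}^S\to\mathbb{R}$, such that $\sum_{S}\hat m^\ast_S(x_S)=\hat m_{\mathrm{Sum}}(x)$ for all $x$ and such that for every $S\subseteq\{1,\dots,d\}$ $$\sum_{T\subseteq\{1,\dots,d\}:\ T\cap S\neq\emptyset}\int \hat m^\ast_T(x_T)\,\hat p_S(x_S)\,\mathrm dx_S=0 .$$ These functions are given by $$\hat m^\ast_S(x_S)=\sum_{V\subseteq S}(-1)^{|S\setminus V|}\int \hat m_{\mathrm{Sum}}(x)\,\hat p_{-V}(x_{-V})\,\mathrm dx_{-V}.$$ In particular, $\hat m^\ast_S$ depends on $\hat m^{(0)}$ only through $\hat m_{\mathrm{Sum}}$.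
   Context: For $S\subseteq\{1,\dots,d\}$, $x_S=(x_k)_{k\in S}$, $-V$ denotes the complement $\{1,\dots,d\}\setminus V$, and $\mathrm dx_S$ denotes integration over the coordinates in $S$ (for the empty set the integral is the identity). Functions $\hat m_\emptyset$ are constants. All integrals appearing are assumed to exist and be finite. *)

theory Defs
  imports "HOL-Probability.Probability"
begin

text \<open>Coordinates are indexed by the set D = {1..d}. A point of R^d is modelled as a
total function x :: nat => real (only coordinates in D matter). A function on R^S is
modelled as a function f :: (nat => real) => real that is applied to  restrict x S ,
i.e. to the element x_S of the extensional function space  S ->E UNIV , which is the
carrier of the product Lebesgue measure  PiM S (%_. lborel)  on R^S.\<close>

definition coords :: "nat \<Rightarrow> nat set" where
  "coords d = {1..d}"

definition leb :: "nat set \<Rightarrow> (nat \<Rightarrow> real) measure" where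
  "leb S = PiM S (\<lambda>_. lborel)"

definition upd :: "nat set \<Rightarrow> (nat \<Rightarrow> real) \<Rightarrow> (nat \<Rightarrow> real) \<Rightarrow> (nat \<Rightarrow> real)" where
  "upd S y x = (\<lambda>i. if i \<in> S then y i else x i)"

definition is_density :: "nat set \<Rightarrow> ((nat \<Rightarrow> real) \<Rightarrow> real) \<Rightarrow> bool" where
  "is_density S q \<longleftrightarrow> q \<in> borel_measurable (leb S)
     \<and> (\<forall>y \<in> space (leb S). 0 \<le> q y)
     \<and> (\<integral>\<^sup>+ y. ennreal (q y) \<partial>leb S) = 1"

definition m_sum :: "nat \<Rightarrow> (nat set \<Rightarrow> (nat \<Rightarrow> real) \<Rightarrow> real) \<Rightarrow> (nat \<Rightarrow> real) \<Rightarrow> real" where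
  "m_sum d m0 x = (\<Sum>S\<in>Pow (coords d). m0 S (restrict x S))"

definition m_star :: "nat \<Rightarrow> (nat set \<Rightarrow> (nat \<Rightarrow> real) \<Rightarrow> real)
     \<Rightarrow> (nat set \<Rightarrow> (nat \<Rightarrow> real) \<Rightarrow> real) \<Rightarrow> nat set \<Rightarrow> (nat \<Rightarrow> real) \<Rightarrow> real" where
  "m_star d p m0 S x = (\<Sum>V\<in>Pow S. (-1) ^ card (S - V) *
      (\<integral> y. m_sum d m0 (upd (coords d - V) y x) * p (coords d - V) y \<partial>leb (coords d - V)))"

definition integrals_exist :: "nat \<Rightarrow> (nat set \<Rightarrow> (nat \<Rightarrow> real) \<Rightarrow> real)
     \<Rightarrow> (nat set \<Rightarrow> (nat \<Rightarrow> real) \<Rightarrow> real) \<Rightarrow> bool" where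
  "integrals_exist d p m \<longleftrightarrow>
     (\<forall>S T x. S \<subseteq> coords d \<longrightarrow> T \<subseteq> coords d \<longrightarrow>
        integrable (leb S) (\<lambda>y. m T (restrict (upd S y x) T) * p S y))"

definition admissible :: "nat \<Rightarrow> (nat set \<Rightarrow> (nat \<Rightarrow> real) \<Rightarrow> real)
     \<Rightarrow> (nat set \<Rightarrow> (nat \<Rightarrow> real) \<Rightarrow> real) \<Rightarrow> (nat set \<Rightarrow> (nat \<Rightarrow> real) \<Rightarrow> real) \<Rightarrow> bool" where
  "admissible d p m0 m \<longleftrightarrow>
     integrals_exist d p m
     \<and> (\<forall>x. (\<Sum>T\<in>Pow (coords d). m T (restrict x T)) = m_sum d m0 x)
     \<and> (\<forall>S x. S \<subseteq> coords d \<longrightarrow>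
          (\<Sum>T\<in>{T\<in>Pow (coords d). T \<inter> S \<noteq> {}}.
              \<integral> y. m T (restrict (upd S y x) T) * p S y \<partial>leb S) = 0)"

end

theory Submission
  imports Defs
begin

(* Write g_V for the partial dependence function of m_Sum on the coordinates V, that is,
   m_Sum integrated against p_{-V} over the remaining coordinates. For any decomposition m of
   m_Sum, linearity of the integral and the fact that p_S integrates to 1 show that the
   constraint attached to S equals g_{-S}(x) - sum_{T subset -S} m_T(x_T). Hence m satisfies
   all constraints iff sum_{T subset A} m_T(x_T) = g_A(x) for every A, and by Moebius inversion
   on the subset lattice this system has the unique solution
   m_S = sum_{V subset S} (-1)^|S - V| g_V, which is m_star. *)

lemma sum_supersets_minus_one_power:
  assumes "finite A" "V \<subseteq> A"
  shows "(\<Sum>T\<in>{T\<in>Pow A. V \<subseteq> T}. (-1::'a::ring_1) ^ card (T - V)) = (if V = A then 1 else 0)"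
proof (cases "V = A")
  case True
  then have "{T\<in>Pow A. V \<subseteq> T} = {A}" by auto
  then show ?thesis using True by simp
next
  case False
  let ?U = "{T\<in>Pow A. V \<subseteq> T}"
  have fin: "finite ?U" using assms(1) by simp
  have "(-1::'a) ^ card (T - V) = (-1) ^ card T * (-1) ^ card V" if "T \<in> ?U" for T
    using that assms finite_subset[of T A] finite_subset[of V A]
    by (simp add: card_Diff_subset card_mono neg_one_power_add_eq_neg_one_power_diff flip: power_add)
  then have "(\<Sum>T\<in>?U. (-1::'a) ^ card (T - V)) = (\<Sum>T\<in>?U. (-1) ^ card T) * (-1) ^ card V"
    by (simp add: sum_distrib_right)
  also have "(\<Sum>T\<in>?U. (-1::'a) ^ card T) = 0"
  proof (rule sum_alternating_cancels[OF fin])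
    have "V \<subset> A" using assms(2) False by auto
    then have "card {T. T \<subseteq> A \<and> V \<subseteq> T \<and> even (card T)} = card {T. T \<subseteq> A \<and> V \<subseteq> T \<and> odd (card T)}"
      by (rule card_subsupersets_even_odd[OF assms(1)])
    then show "card {T. T \<in> ?U \<and> even (card T)} = card {T. T \<in> ?U \<and> odd (card T)}"
      by (simp add: conj_ac)
  qed
  finally show ?thesis using False by simp
qed

lemma sum_Pow_mobius_inverse:
  fixes g :: "'a set \<Rightarrow> 'b::ring_1"
  assumes "finite A"
  shows "(\<Sum>T\<in>Pow A. \<Sum>V\<in>Pow T. (-1) ^ card (T - V) * g V) = g A"
proof -
  have "(\<Sum>T\<in>Pow A. \<Sum>V\<in>Pow T. (-1) ^ card (T - V) * g V)
      = (\<Sum>T\<in>Pow A. \<Sum>V\<in>{V\<in>Pow A. V \<subseteq> T}. (-1) ^ card (T - V) * g V)"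
    by (intro sum.cong refl arg_cong[where f="\<lambda>B. sum _ B"]) auto
  also have "\<dots> = (\<Sum>V\<in>Pow A. \<Sum>T\<in>{T\<in>Pow A. V \<subseteq> T}. (-1) ^ card (T - V) * g V)"
    by (rule sum.swap_restrict) (use assms in auto)
  also have "\<dots> = (\<Sum>V\<in>Pow A. if V = A then g V else 0)"
  proof (rule sum.cong[OF refl])
    fix V assume "V \<in> Pow A"
    have "(\<Sum>T\<in>{T\<in>Pow A. V \<subseteq> T}. (-1) ^ card (T - V) * g V)
        = (\<Sum>T\<in>{T\<in>Pow A. V \<subseteq> T}. (-1) ^ card (T - V)) * g V"
      by (rule sum_distrib_right[symmetric])
    also have "\<dots> = (if V = A then 1 else 0) * g V"
      by (subst sum_supersets_minus_one_power) (use assms \<open>V \<in> Pow A\<close> in auto)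
    finally show "(\<Sum>T\<in>{T\<in>Pow A. V \<subseteq> T}. (-1) ^ card (T - V) * g V) = (if V = A then g V else 0)"
      by simp
  qed
  finally show ?thesis using assms by simp
qed

lemma inclusion_exclusion_mobius_Pow:
  fixes f g :: "'a set \<Rightarrow> 'b::ring_1"
  assumes "finite B" "S \<subseteq> B" and sum_eq: "\<And>A. A \<subseteq> B \<Longrightarrow> g A = sum f (Pow A)"
  shows "f S = (\<Sum>T\<in>Pow S. (-1) ^ card (S - T) * g T)"
proof -
  define f' where "f' T = (if T \<subseteq> S then f T else 0)" for T
  have fin: "finite S" using assms(2,1) by (rule finite_subset)
  have "f' S = (\<Sum>T\<in>Pow S. (-1) ^ (card S - card T) * sum f' (Pow T))"
    by (rule inclusion_exclusion_mobius) (use fin in auto)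
  also have "\<dots> = (\<Sum>T\<in>Pow S. (-1) ^ card (S - T) * g T)"
  proof (rule sum.cong[OF refl])
    fix T assume T: "T \<in> Pow S"
    have "sum f' (Pow T) = sum f (Pow T)"
      using T by (intro sum.cong) (auto simp: f'_def)
    also have "\<dots> = g T"
      using T assms(2) by (intro sum_eq[symmetric]) auto
    finally have "sum f' (Pow T) = g T" .
    then show "(-1) ^ (card S - card T) * sum f' (Pow T) = (-1) ^ card (S - T) * g T"
      using T fin by (simp add: card_Diff_subset finite_subset)
  qed
  finally show ?thesis by (simp add: f'_def)
qed

definition partial_dependence :: "nat \<Rightarrow> (nat set \<Rightarrow> (nat \<Rightarrow> real) \<Rightarrow> real)
     \<Rightarrow> (nat set \<Rightarrow> (nat \<Rightarrow> real) \<Rightarrow> real) \<Rightarrow> nat set \<Rightarrow> (nat \<Rightarrow> real) \<Rightarrow> real" where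
  "partial_dependence d p m0 V x =
     (\<integral> y. m_sum d m0 (upd (coords d - V) y x) * p (coords d - V) y \<partial>leb (coords d - V))"

lemma m_star_eq_partial_dependence:
  "m_star d p m0 S x = (\<Sum>V\<in>Pow S. (-1) ^ card (S - V) * partial_dependence d p m0 V x)"
  by (simp add: m_star_def partial_dependence_def)

lemma finite_coords [simp]: "finite (coords d)"
  by (simp add: coords_def)

lemma m_sum_cong:
  assumes "\<And>i. i \<in> coords d \<Longrightarrow> x i = x' i"
  shows "m_sum d m0 x = m_sum d m0 x'"
proof -
  have "restrict x S = restrict x' S" if "S \<subseteq> coords d" for S
    using assms that by (intro restrict_ext) auto
  then show ?thesis
    unfolding m_sum_def by (intro sum.cong) auto
qed

lemma partial_dependence_cong:
  assumes "V \<subseteq> coords d" "\<And>i. i \<in> V \<Longrightarrow> x i = x' i"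
  shows "partial_dependence d p m0 V x = partial_dependence d p m0 V x'"
  unfolding partial_dependence_def
  by (intro Bochner_Integration.integral_cong refl arg_cong2[where f="(*)"] m_sum_cong)
     (use assms in \<open>auto simp: upd_def\<close>)

lemma m_star_restrict:
  assumes "S \<subseteq> coords d"
  shows "m_star d p m0 S (restrict x S) = m_star d p m0 S x"
  unfolding m_star_eq_partial_dependence
  by (intro sum.cong refl arg_cong2[where f="(*)"] partial_dependence_cong) (use assms in auto)

lemma is_density_integral:
  assumes "is_density S q"
  shows "integrable (leb S) q" "integral\<^sup>L (leb S) q = 1"
proof -
  have meas: "q \<in> borel_measurable (leb S)" and nonneg: "\<forall>y \<in> space (leb S). 0 \<le> q y"
    and one: "(\<integral>\<^sup>+ y. ennreal (q y) \<partial>leb S) = 1"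
    using assms by (auto simp: is_density_def)
  show int: "integrable (leb S) q"
    by (rule integrableI_nonneg) (use meas nonneg one in auto)
  have "(\<integral>\<^sup>+ y. ennreal (q y) \<partial>leb S) = ennreal (integral\<^sup>L (leb S) q)"
    by (rule nn_integral_eq_integral) (use int nonneg in auto)
  with one show "integral\<^sup>L (leb S) q = 1"
    by (metis ennreal_eq_1 integral_nonneg_AE AE_I2 nonneg)
qed

text \<open>The space R^{} is a single point, on which a density must take the value 1.\<close>

lemma partial_dependence_coords:
  assumes "is_density {} (p {})"
  shows "partial_dependence d p m0 (coords d) x = m_sum d m0 x"
proof -
  have "p {} (\<lambda>_. undefined) = 1"
    using is_density_integral(2)[OF assms]
    by (simp add: leb_def PiM_empty lebesgue_integral_count_space_finite)
  then show ?thesis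
    by (simp add: partial_dependence_def leb_def PiM_empty lebesgue_integral_count_space_finite upd_def)
qed

lemma sum_Pow_m_star:
  assumes "A \<subseteq> coords d"
  shows "(\<Sum>T\<in>Pow A. m_star d p m0 T (restrict x T)) = partial_dependence d p m0 A x"
proof -
  have "finite A" using assms by (rule finite_subset) simp
  moreover have "m_star d p m0 T (restrict x T) = m_star d p m0 T x" if "T \<in> Pow A" for T
    using that assms by (intro m_star_restrict) auto
  ultimately show ?thesis
    by (simp add: m_star_eq_partial_dependence sum_Pow_mobius_inverse)
qed

lemma orthogonality_sum_eq:
  assumes S: "S \<subseteq> coords d" and density: "is_density S (p S)"
    and integrable: "integrals_exist d p m"
    and decomp: "\<And>x. (\<Sum>T\<in>Pow (coords d). m T (restrict x T)) = m_sum d m0 x"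
  shows "(\<Sum>T\<in>{T\<in>Pow (coords d). T \<inter> S \<noteq> {}}. \<integral> y. m T (restrict (upd S y x) T) * p S y \<partial>leb S)
       = partial_dependence d p m0 (coords d - S) x - (\<Sum>T\<in>Pow (coords d - S). m T (restrict x T))"
proof -
  let ?D = "coords d"
  let ?I = "\<lambda>T. \<integral> y. m T (restrict (upd S y x) T) * p S y \<partial>leb S"
  have "?D - (?D - S) = S" using S by auto
  then have "partial_dependence d p m0 (?D - S) x = (\<integral> y. m_sum d m0 (upd S y x) * p S y \<partial>leb S)"
    by (simp add: partial_dependence_def)
  also have "\<dots> = (\<integral> y. (\<Sum>T\<in>Pow ?D. m T (restrict (upd S y x) T) * p S y) \<partial>leb S)"
    by (simp add: decomp[symmetric] sum_distrib_right)
  also have "\<dots> = (\<Sum>T\<in>Pow ?D. ?I T)"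
    by (rule Bochner_Integration.integral_sum) (use integrable S in \<open>auto simp: integrals_exist_def\<close>)
  also have "\<dots> = (\<Sum>T\<in>{T\<in>Pow ?D. T \<inter> S \<noteq> {}} \<union> Pow (?D - S). ?I T)"
    by (rule sum.cong) auto
  also have "\<dots> = (\<Sum>T\<in>{T\<in>Pow ?D. T \<inter> S \<noteq> {}}. ?I T) + (\<Sum>T\<in>Pow (?D - S). ?I T)"
    by (rule sum.union_disjoint) auto
  also have "(\<Sum>T\<in>Pow (?D - S). ?I T) = (\<Sum>T\<in>Pow (?D - S). m T (restrict x T))"
  proof (rule sum.cong[OF refl])
    fix T assume "T \<in> Pow (?D - S)"
    then have "restrict (upd S y x) T = restrict x T" for y
      by (intro restrict_ext) (auto simp: upd_def)
    then show "?I T = m T (restrict x T)"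
      using is_density_integral(2)[OF density] by simp
  qed
  finally show ?thesis by linarith
qed

lemma admissible_iff_sum_Pow_eq_partial_dependence:
  assumes densities: "\<forall>S \<subseteq> coords d. is_density S (p S)"
  shows "admissible d p m0 m \<longleftrightarrow> integrals_exist d p m \<and>
           (\<forall>A \<subseteq> coords d. \<forall>x. (\<Sum>T\<in>Pow A. m T (restrict x T)) = partial_dependence d p m0 A x)"
    (is "_ \<longleftrightarrow> _ \<and> ?sums")
proof
  assume "admissible d p m0 m"
  then have integrable: "integrals_exist d p m"
    and decomp: "\<And>x. (\<Sum>T\<in>Pow (coords d). m T (restrict x T)) = m_sum d m0 x"
    and orth: "\<And>S x. S \<subseteq> coords d \<Longrightarrow> (\<Sum>T\<in>{T\<in>Pow (coords d). T \<inter> S \<noteq> {}}.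
                 \<integral> y. m T (restrict (upd S y x) T) * p S y \<partial>leb S) = 0"
    unfolding admissible_def by blast+
  have ?sums
  proof (intro allI impI)
    fix A x assume "A \<subseteq> coords d"
    then have sub: "coords d - A \<subseteq> coords d" and compl: "coords d - (coords d - A) = A"
      by auto
    from orthogonality_sum_eq[OF sub densities[rule_format, OF sub] integrable decomp, of x]
      orth[OF sub, of x]
    show "(\<Sum>T\<in>Pow A. m T (restrict x T)) = partial_dependence d p m0 A x"
      unfolding compl by linarith
  qed
  with integrable show "integrals_exist d p m \<and> ?sums" ..
next
  assume "integrals_exist d p m \<and> ?sums"
  then have integrable: "integrals_exist d p m" and sums: ?sums by auto
  have decomp: "(\<Sum>T\<in>Pow (coords d). m T (restrict x T)) = m_sum d m0 x" for x
    using sums partial_dependence_coords[where p = p, OF densities[rule_format, OF empty_subsetI]]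
    by auto
  have orth: "(\<Sum>T\<in>{T\<in>Pow (coords d). T \<inter> S \<noteq> {}}.
                 \<integral> y. m T (restrict (upd S y x) T) * p S y \<partial>leb S) = 0"
    if S: "S \<subseteq> coords d" for S x
    using orthogonality_sum_eq[OF S densities[rule_format, OF S] integrable decomp, of x]
      sums[rule_format, of "coords d - S" x, OF Diff_subset]
    by linarith
  show "admissible d p m0 m"
    unfolding admissible_def using integrable decomp orth by blast
qed

theorem theorem1:
  fixes d :: nat
    and p :: "nat set \<Rightarrow> (nat \<Rightarrow> real) \<Rightarrow> real"
    and m0 :: "nat set \<Rightarrow> (nat \<Rightarrow> real) \<Rightarrow> real"
  assumes "d \<ge> 1"
    and "\<And>S. S \<subseteq> coords d \<Longrightarrow> is_density S (p S)"
    and "\<And>V x. V \<subseteq> coords d \<Longrightarrow>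
           integrable (leb (coords d - V))
             (\<lambda>y. m_sum d m0 (upd (coords d - V) y x) * p (coords d - V) y)"
    and "integrals_exist d p (m_star d p m0)"
  shows "admissible d p m0 (m_star d p m0)
       \<and> (\<forall>m. admissible d p m0 m \<longrightarrow>
            (\<forall>S \<subseteq> coords d. \<forall>x \<in> S \<rightarrow>\<^sub>E UNIV. m S x = m_star d p m0 S x))"
proof
  have "\<forall>S \<subseteq> coords d. is_density S (p S)"
    using assms(2) by blast
  note admissible_iff = admissible_iff_sum_Pow_eq_partial_dependence[OF this]
  show "admissible d p m0 (m_star d p m0)"
    using admissible_iff assms(4) sum_Pow_m_star by blast
  show "\<forall>m. admissible d p m0 m \<longrightarrow>
          (\<forall>S \<subseteq> coords d. \<forall>x \<in> S \<rightarrow>\<^sub>E UNIV. m S x = m_star d p m0 S x)"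
  proof (intro allI impI ballI)
    fix m S and x :: "nat \<Rightarrow> real"
    assume "admissible d p m0 m" and S: "S \<subseteq> coords d" and x: "x \<in> S \<rightarrow>\<^sub>E UNIV"
    then have sums: "\<forall>A \<subseteq> coords d. (\<Sum>T\<in>Pow A. m T (restrict x T)) = partial_dependence d p m0 A x"
      using admissible_iff by blast
    have "m S (restrict x S) = m_star d p m0 S x"
      unfolding m_star_eq_partial_dependence
      by (rule inclusion_exclusion_mobius_Pow[where f = "\<lambda>T. m T (restrict x T)", OF finite_coords S])
         (use sums in simp)
    moreover have "restrict x S = x"
      using x by (simp add: PiE_def extensional_restrict)
    ultimately show "m S x = m_star d p m0 S x" by simp
  qed
qed

end
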